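(* Let $a<b$, $\gamma>0$, $\mu=e^{-\gamma(b-a)}$, let $k\ge 1$ be an integer, and let $C_a,C_b\in\mathbb{R}$ be given. With the operators $I^L, I^R, I^0, \mathcal{D}_L, \mathcal{D}_R, \mathcal{D}_0$ defined in the context (with boundary data $C_a$, $C_b$): (i) If $v\in\mathcal{C}^{k+1}[a,b]$, then for all $x\in[a,b]$, \[ \mathcal{D}_{L}[v,\gamma](x) = -\sum_{p=1}^{k}\left(-\frac{1}{\gamma}\right)^{p}\left(\partial_x^{p}v(x)-\partial_x^{p}v(a)e^{-\gamma(x-a)}\right) - \left(-\frac{1}{\gamma}\right)^{k+1} I^{L}[\partial_x^{k+1}v,\gamma](x) + C_a e^{-\gamma(x-a)}, \] \[ \mathcal{D}_{R}[v,\gamma](x) = -\sum_{p=1}^{k}\left(\frac{1}{\gamma}\right)^{p}\left(\partial_x^{p}v(x)-\partial_x^{p}v(b)e^{-\gamma(b-x)}\right) - \left(\frac{1}{\gamma}\right)^{k+1} I^{R}[\partial_x^{k+1}v,\gamma](x) + C_b e^{-\gamma(b-x)}. \] (ii) If $v\in\mathcal{C}^{2k+2}[a,b]$, then for all $x\in[a,b]$, \begin{align*} \mathcal{D}_{0}[v,\gamma](x) =& -\sum_{p=1}^{k}\left(\frac{1}{\gamma}\right)^{2p}\left(\partial_x^{2p}v(x) + \frac{\mu\,\partial_x^{2p}v(b)-\partial_x^{2p}v(a)}{1-\mu^2}e^{-\gamma(x-a)} + \frac{\mu\,\partial_x^{2p}v(a)-\partial_x^{2p}v(b)}{1-\mu^2}e^{-\gamma(b-x)}\right)\\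 & - \frac{\mu C_b - C_a}{1-\mu^2}e^{-\gamma(x-a)} - \frac{\mu C_a - C_b}{1-\mu^2}e^{-\gamma(b-x)}\\ & - \left(\frac{1}{\gamma}\right)^{2k+2}\Big( I^0[\partial_x^{2k+2}v,\gamma](x) + \frac{\mu I^0[\partial_x^{2k+2}v,\gamma](b) - I^0[\partial_x^{2k+2}v,\gamma](a)}{1-\mu^2}e^{-\gamma(x-a)}\\ &\qquad\qquad + \frac{\mu I^0[\partial_x^{2k+2}v,\gamma](a) - I^0[\partial_x^{2k+2}v,\gamma](b)}{1-\mu^2}e^{-\gamma(b-x)}\Big). \end{align*}
   Context: Fix $a<b$, $\gamma>0$ and $\mu=e^{-\gamma(b-a)}$. For a continuous function $v$ on $[a,b]$ define $I^{L}[v,\gamma](x)=\gamma\int_a^x e^{-\gamma(x-y)}v(y)\,dy$, $I^{R}[v,\gamma](x)=\gamma\int_x^b e^{-\gamma(y-x)}v(y)\,dy$, $I^{0}[v,\gamma](x)=\frac{\gamma}{2}\int_a^b e^{-\gamma|x-y|}v(y)\,dy$. Given real numbers $C_a, C_b$, define $\mathcal{D}_L[v,\gamma](x)=v(x)-I^L[v,\gamma](x)-A_L e^{-\gamma(x-a)}$ with $A_L=v(a)-C_a$ (so that $\mathcal{D}_L[v,\gamma](a)=C_a$); $\mathcal{D}_R[v,\gamma](x)=v(x)-I^R[v,\gamma](x)-B_R e^{-\gamma(b-x)}$ with $B_R=v(b)-C_b$ (so that $\mathcal{D}_R[v,\gamma](b)=C_b$); $\mathcal{D}_0[v,\gamma](x)=v(x)-I^0[v,\gamma](x)-A_0e^{-\gamma(x-a)}-B_0e^{-\gamma(b-x)}$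 with $A_0=\frac{1}{1-\mu^2}\big(\mu(I^0[v,\gamma](b)-v(b)+C_b)-(I^0[v,\gamma](a)-v(a)+C_a)\big)$, $B_0=\frac{1}{1-\mu^2}\big(\mu(I^0[v,\gamma](a)-v(a)+C_a)-(I^0[v,\gamma](b)-v(b)+C_b)\big)$ (so that $\mathcal{D}_0[v,\gamma](a)=C_a$ and $\mathcal{D}_0[v,\gamma](b)=C_b$). Here $\partial_x^p v(a)$, $\partial_x^p v(b)$ denote one-sided derivatives at the endpoints. *)

theory Defs
  imports "HOL-Analysis.Analysis"
begin

definition IL :: "real \<Rightarrow> (real \<Rightarrow> real) \<Rightarrow> real \<Rightarrow> real \<Rightarrow> real" where
  "IL a v \<gamma> x = \<gamma> * integral {a..x} (\<lambda>y. exp (-\<gamma>*(x-y)) * v y)"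

definition IR :: "real \<Rightarrow> (real \<Rightarrow> real) \<Rightarrow> real \<Rightarrow> real \<Rightarrow> real" where
  "IR b v \<gamma> x = \<gamma> * integral {x..b} (\<lambda>y. exp (-\<gamma>*(y-x)) * v y)"

definition I0 :: "real \<Rightarrow> real \<Rightarrow> (real \<Rightarrow> real) \<Rightarrow> real \<Rightarrow> real \<Rightarrow> real" where
  "I0 a b v \<gamma> x = \<gamma>/2 * integral {a..b} (\<lambda>y. exp (-\<gamma>*\<bar>x-y\<bar>) * v y)"

definition DL :: "real \<Rightarrow> real \<Rightarrow> (real \<Rightarrow> real) \<Rightarrow> real \<Rightarrow> real \<Rightarrow> real" where
  "DL a Ca v \<gamma> x = v x - IL a v \<gamma> x - (v a - Ca) * exp (-\<gamma>*(x-a))"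

definition DR :: "real \<Rightarrow> real \<Rightarrow> (real \<Rightarrow> real) \<Rightarrow> real \<Rightarrow> real \<Rightarrow> real" where
  "DR b Cb v \<gamma> x = v x - IR b v \<gamma> x - (v b - Cb) * exp (-\<gamma>*(b-x))"

definition D0 :: "real \<Rightarrow> real \<Rightarrow> real \<Rightarrow> real \<Rightarrow> (real \<Rightarrow> real) \<Rightarrow> real \<Rightarrow> real \<Rightarrow> real" where
  "D0 a b Ca Cb v \<gamma> x =
     (let \<mu> = exp (-\<gamma>*(b-a));
          A0 = (\<mu> * (I0 a b v \<gamma> b - v b + Cb) - (I0 a b v \<gamma> a - v a + Ca)) / (1 - \<mu>^2);
          B0 = (\<mu> * (I0 a b v \<gamma> a - v a + Ca) - (I0 a b v \<gamma> b - v b + Cb)) / (1 - \<mu>^2)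
      in v x - I0 a b v \<gamma> x - A0 * exp (-\<gamma>*(x-a)) - B0 * exp (-\<gamma>*(b-x)))"

text \<open>v is in C^n[a,b] with derivatives Dv j (j = 0..n), Dv 0 = v on [a,b];
  derivatives at the endpoints are one-sided (derivative within [a,b]).\<close>
definition Cn_derivs :: "nat \<Rightarrow> real \<Rightarrow> real \<Rightarrow> (real \<Rightarrow> real) \<Rightarrow> (nat \<Rightarrow> real \<Rightarrow> real) \<Rightarrow> bool" where
  "Cn_derivs n a b v Dv \<longleftrightarrow>
     (\<forall>x\<in>{a..b}. Dv 0 x = v x) \<and>
     (\<forall>j<n. \<forall>x\<in>{a..b}. (Dv j has_real_derivative Dv (Suc j) x) (at x within {a..b})) \<and>
     continuous_on {a..b} (Dv n)"

end

theory Submission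
  imports Defs
begin

text \<open>Integration by parts gives I^L[w] = w - w(a) e^(-\<gamma>(x-a)) - I^L[w']/\<gamma>, and
  symmetrically for I^R; iterating gives (i). Since I^0 = (I^L + I^R)/2, two integrations by parts
  give I^0[w] = w + \<alpha> e^(-\<gamma>(x-a)) + \<beta> e^(-\<gamma>(b-x)) + I^0[w'']/\<gamma>^2. The boundary correction in
  D_0 subtracts from a function the combination of these two exponentials that interpolates it at
  a and b, so it annihilates the exponential terms, and iterating gives (ii).\<close>

lemma IL_by_parts:
  assumes "a \<le> x" "x \<le> b"
    and deriv: "\<forall>y\<in>{a..b}. (w has_real_derivative w' y) (at y within {a..b})"
  shows "IL a w' \<gamma> x = \<gamma> * (w x - w a * exp (-\<gamma>*(x-a))) - \<gamma> * IL a w \<gamma> x"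
proof -
  let ?E = "\<lambda>y. exp (-\<gamma>*(x-y))"
  have sub: "{a..x} \<subseteq> {a..b}" using assms by auto
  have d: "(w has_real_derivative w' y) (at y within {a..x})" if "y \<in> {a..x}" for y
    using deriv sub that by (meson has_field_derivative_subset subsetD)
  have int: "((\<lambda>y. ?E y * w y) has_integral integral {a..x} (\<lambda>y. ?E y * w y)) {a..x}"
    by (intro integrable_integral integrable_continuous_interval continuous_intros
        DERIV_continuous_on[OF d])
  have ftc: "((\<lambda>y. \<gamma> * ?E y * w y + ?E y * w' y) has_integral
      ?E x * w x - ?E a * w a) {a..x}"
  proof (rule fundamental_theorem_of_calculus[OF \<open>a \<le> x\<close>])
    fix y assume "y \<in> {a..x}"
    show "((\<lambda>y. ?E y * w y) has_vector_derivative \<gamma> * ?E y * w y + ?E y * w' y) (at y within {a..x})"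
      unfolding has_real_derivative_iff_has_vector_derivative[symmetric]
      by (rule derivative_eq_intros d[OF \<open>y \<in> {a..x}\<close>] refl | simp add: algebra_simps)+
  qed
  have "((\<lambda>y. ?E y * w' y) has_integral
      w x - ?E a * w a - \<gamma> * integral {a..x} (\<lambda>y. ?E y * w y)) {a..x}"
    using has_integral_diff[OF ftc has_integral_mult_right[OF int, of \<gamma>]] by (simp add: algebra_simps)
  then show ?thesis
    unfolding IL_def by (simp add: integral_unique algebra_simps)
qed

lemma IR_by_parts:
  assumes "a \<le> x" "x \<le> b"
    and deriv: "\<forall>y\<in>{a..b}. (w has_real_derivative w' y) (at y within {a..b})"
  shows "IR b w' \<gamma> x = \<gamma> * (w b * exp (-\<gamma>*(b-x)) - w x) + \<gamma> * IR b w \<gamma> x"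
proof -
  let ?E = "\<lambda>y. exp (-\<gamma>*(y-x))"
  have sub: "{x..b} \<subseteq> {a..b}" using assms by auto
  have d: "(w has_real_derivative w' y) (at y within {x..b})" if "y \<in> {x..b}" for y
    using deriv sub that by (meson has_field_derivative_subset subsetD)
  have int: "((\<lambda>y. ?E y * w y) has_integral integral {x..b} (\<lambda>y. ?E y * w y)) {x..b}"
    by (intro integrable_integral integrable_continuous_interval continuous_intros
        DERIV_continuous_on[OF d])
  have ftc: "((\<lambda>y. - \<gamma> * ?E y * w y + ?E y * w' y) has_integral
      ?E b * w b - ?E x * w x) {x..b}"
  proof (rule fundamental_theorem_of_calculus[OF \<open>x \<le> b\<close>])
    fix y assume "y \<in> {x..b}"
    show "((\<lambda>y. ?E y * w y) has_vector_derivative - \<gamma> * ?E y * w y + ?E y * w' y) (at y within {x..b})"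
      unfolding has_real_derivative_iff_has_vector_derivative[symmetric]
      by (rule derivative_eq_intros d[OF \<open>y \<in> {x..b}\<close>] refl | simp add: algebra_simps)+
  qed
  have "((\<lambda>y. ?E y * w' y) has_integral
      ?E b * w b - w x + \<gamma> * integral {x..b} (\<lambda>y. ?E y * w y)) {x..b}"
    using has_integral_add[OF ftc has_integral_mult_right[OF int, of \<gamma>]] by (simp add: algebra_simps)
  then show ?thesis
    unfolding IR_def by (simp add: integral_unique algebra_simps)
qed

lemma I0_eq_IL_IR:
  assumes "a \<le> x" "x \<le> b" "continuous_on {a..b} w"
  shows "I0 a b w \<gamma> x = (IL a w \<gamma> x + IR b w \<gamma> x) / 2"
proof -
  let ?f = "\<lambda>y. exp (-\<gamma>*\<bar>x-y\<bar>) * w y"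
  have "?f integrable_on {a..b}"
    by (intro integrable_continuous_interval continuous_intros assms)
  then have "integral {a..b} ?f = integral {a..x} ?f + integral {x..b} ?f"
    by (rule Henstock_Kurzweil_Integration.integral_combine[OF assms(1,2), symmetric])
  also have "integral {a..x} ?f = integral {a..x} (\<lambda>y. exp (-\<gamma>*(x-y)) * w y)"
    by (rule integral_cong) auto
  also have "integral {x..b} ?f = integral {x..b} (\<lambda>y. exp (-\<gamma>*(y-x)) * w y)"
    by (rule integral_cong) auto
  finally show ?thesis
    unfolding I0_def IL_def IR_def by (simp add: algebra_simps)
qed

lemma IL_cong: "(\<And>y. y \<in> {a..b} \<Longrightarrow> f y = g y) \<Longrightarrow> x \<le> b \<Longrightarrow> IL a f \<gamma> x = IL a g \<gamma> x"
  unfolding IL_def by (auto intro!: arg_cong[where f = "\<lambda>t. \<gamma> * t"] integral_cong)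

lemma IR_cong: "(\<And>y. y \<in> {a..b} \<Longrightarrow> f y = g y) \<Longrightarrow> a \<le> x \<Longrightarrow> IR b f \<gamma> x = IR b g \<gamma> x"
  unfolding IR_def by (auto intro!: arg_cong[where f = "\<lambda>t. \<gamma> * t"] integral_cong)

lemma I0_cong: "(\<And>y. y \<in> {a..b} \<Longrightarrow> f y = g y) \<Longrightarrow> I0 a b f \<gamma> x = I0 a b g \<gamma> x"
  unfolding I0_def by (auto intro!: arg_cong[where f = "\<lambda>t. \<gamma>/2 * t"] integral_cong)

lemma Cn_derivs_deriv:
  "Cn_derivs n a b v Dv \<Longrightarrow> j < n \<Longrightarrow>
    \<forall>y\<in>{a..b}. (Dv j has_real_derivative Dv (Suc j) y) (at y within {a..b})"
  unfolding Cn_derivs_def by blast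

lemma Cn_derivs_continuous:
  assumes "Cn_derivs n a b v Dv" "j \<le> n"
  shows "continuous_on {a..b} (Dv j)"
proof (cases "j = n")
  case True
  then show ?thesis using assms unfolding Cn_derivs_def by blast
next
  case False
  then show ?thesis
    using Cn_derivs_deriv[OF assms(1), of j] assms(2) by (intro DERIV_continuous_on) auto
qed

lemma Cn_derivs_IL_step:
  assumes C: "Cn_derivs n a b v Dv" and "j < n" "x \<in> {a..b}" "\<gamma> > 0"
  shows "IL a (Dv j) \<gamma> x = Dv j x - Dv j a * exp (-\<gamma>*(x-a)) - IL a (Dv (Suc j)) \<gamma> x / \<gamma>"
proof -
  have "IL a (Dv (Suc j)) \<gamma> x = \<gamma> * (Dv j x - Dv j a * exp (-\<gamma>*(x-a))) - \<gamma> * IL a (Dv j) \<gamma> x"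
    using assms Cn_derivs_deriv[OF C] by (intro IL_by_parts) auto
  then show ?thesis using \<open>\<gamma> > 0\<close> by (simp add: field_simps)
qed

lemma Cn_derivs_IR_step:
  assumes C: "Cn_derivs n a b v Dv" and "j < n" "x \<in> {a..b}" "\<gamma> > 0"
  shows "IR b (Dv j) \<gamma> x = Dv j x - Dv j b * exp (-\<gamma>*(b-x)) + IR b (Dv (Suc j)) \<gamma> x / \<gamma>"
proof -
  have "IR b (Dv (Suc j)) \<gamma> x = \<gamma> * (Dv j b * exp (-\<gamma>*(b-x)) - Dv j x) + \<gamma> * IR b (Dv j) \<gamma> x"
    using assms Cn_derivs_deriv[OF C] by (intro IR_by_parts) auto
  then show ?thesis using \<open>\<gamma> > 0\<close> by (simp add: field_simps)
qed

lemma DL_expansion: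
  assumes C: "Cn_derivs n a b v Dv" and x: "x \<in> {a..b}" and "\<gamma> > 0"
  shows "m + 1 \<le> n \<Longrightarrow> DL a Ca v \<gamma> x =
          - (\<Sum>p=1..m. (-1/\<gamma>)^p * (Dv p x - Dv p a * exp (-\<gamma>*(x-a))))
          - (-1/\<gamma>)^(m+1) * IL a (Dv (m+1)) \<gamma> x + Ca * exp (-\<gamma>*(x-a))"
proof (induction m)
  case 0
  have v: "\<And>y. y \<in> {a..b} \<Longrightarrow> v y = Dv 0 y" using C unfolding Cn_derivs_def by auto
  have "IL a v \<gamma> x = IL a (Dv 0) \<gamma> x" using v x by (intro IL_cong) auto
  then show ?case
    using x v[of x] v[of a] Cn_derivs_IL_step[OF C _ x \<open>\<gamma> > 0\<close>, of 0] 0 \<open>\<gamma> > 0\<close>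
    unfolding DL_def by (simp add: field_simps)
next
  case (Suc m)
  have step: "IL a (Dv (m+1)) \<gamma> x = Dv (m+1) x - Dv (m+1) a * exp (-\<gamma>*(x-a)) - IL a (Dv (m+2)) \<gamma> x / \<gamma>"
    using Cn_derivs_IL_step[OF C _ x \<open>\<gamma> > 0\<close>, of "m+1"] Suc.prems by simp
  show ?case
    unfolding Suc.IH[OF Suc_leD[OF Suc.prems[unfolded add_Suc]]] step using \<open>\<gamma> > 0\<close>
    by (simp add: field_simps sum.cl_ivl_Suc)
qed

lemma DR_expansion:
  assumes C: "Cn_derivs n a b v Dv" and x: "x \<in> {a..b}" and "\<gamma> > 0"
  shows "m + 1 \<le> n \<Longrightarrow> DR b Cb v \<gamma> x =
          - (\<Sum>p=1..m. (1/\<gamma>)^p * (Dv p x - Dv p b * exp (-\<gamma>*(b-x))))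
          - (1/\<gamma>)^(m+1) * IR b (Dv (m+1)) \<gamma> x + Cb * exp (-\<gamma>*(b-x))"
proof (induction m)
  case 0
  have v: "\<And>y. y \<in> {a..b} \<Longrightarrow> v y = Dv 0 y" using C unfolding Cn_derivs_def by auto
  have "IR b v \<gamma> x = IR b (Dv 0) \<gamma> x" using v x by (intro IR_cong) auto
  then show ?case
    using x v[of x] v[of b] Cn_derivs_IR_step[OF C _ x \<open>\<gamma> > 0\<close>, of 0] 0 \<open>\<gamma> > 0\<close>
    unfolding DR_def by (simp add: field_simps)
next
  case (Suc m)
  have step: "IR b (Dv (m+1)) \<gamma> x = Dv (m+1) x - Dv (m+1) b * exp (-\<gamma>*(b-x)) + IR b (Dv (m+2)) \<gamma> x / \<gamma>"
    using Cn_derivs_IR_step[OF C _ x \<open>\<gamma> > 0\<close>, of "m+1"] Suc.prems by simp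
  show ?case
    unfolding Suc.IH[OF Suc_leD[OF Suc.prems[unfolded add_Suc]]] step using \<open>\<gamma> > 0\<close>
    by (simp add: field_simps sum.cl_ivl_Suc)
qed

lemma I0_two_steps:
  assumes C: "Cn_derivs n a b v Dv" and "j + 2 \<le> n" "\<gamma> > 0"
  obtains \<alpha> \<beta> where "\<forall>y\<in>{a..b}. I0 a b (Dv j) \<gamma> y =
    Dv j y + \<alpha> * exp (-\<gamma>*(y-a)) + \<beta> * exp (-\<gamma>*(b-y)) + (1/\<gamma>)^2 * I0 a b (Dv (j+2)) \<gamma> y"
proof
  show "\<forall>y\<in>{a..b}. I0 a b (Dv j) \<gamma> y = Dv j y
      + (- Dv j a / 2 + Dv (Suc j) a / (2*\<gamma>)) * exp (-\<gamma>*(y-a))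
      + (- Dv j b / 2 - Dv (Suc j) b / (2*\<gamma>)) * exp (-\<gamma>*(b-y))
      + (1/\<gamma>)^2 * I0 a b (Dv (j+2)) \<gamma> y"
    using assms
    by (simp add: I0_eq_IL_IR Cn_derivs_continuous[OF C] Cn_derivs_IL_step[OF C]
        Cn_derivs_IR_step[OF C] field_simps power2_eq_square)
qed

text \<open>h minus the combination of e^(-\<gamma>(x-a)) and e^(-\<gamma>(b-x)) that agrees with h at a and b.\<close>
definition bdry_free :: "real \<Rightarrow> real \<Rightarrow> (real \<Rightarrow> real) \<Rightarrow> real \<Rightarrow> real \<Rightarrow> real" where
  "bdry_free a b h \<gamma> x = h x
     + (exp (-\<gamma>*(b-a)) * h b - h a) / (1 - exp (-\<gamma>*(b-a))^2) * exp (-\<gamma>*(x-a))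
     + (exp (-\<gamma>*(b-a)) * h a - h b) / (1 - exp (-\<gamma>*(b-a))^2) * exp (-\<gamma>*(b-x))"

lemma one_minus_exp_neg_sq_ne_0:
  fixes t :: real
  assumes "t > 0"
  shows "1 - exp (-t)^2 \<noteq> 0"
proof -
  have "exp (-t)^2 < 1"
    using assms by (simp add: power_less_one_iff)
  then show ?thesis by simp
qed

lemma bdry_free_affine:
  assumes "a < b" "\<gamma> > 0" "x \<in> {a..b}"
    and f: "\<forall>y\<in>{a..b}. f y = g y + \<alpha> * exp (-\<gamma>*(y-a)) + \<beta> * exp (-\<gamma>*(b-y)) + c * h y"
  shows "bdry_free a b f \<gamma> x = bdry_free a b g \<gamma> x + c * bdry_free a b h \<gamma> x"
proof -
  define \<mu> where "\<mu> = exp (-\<gamma>*(b-a))"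
  define d where "d = 1 - \<mu>^2"
  have "d \<noteq> 0"
    unfolding d_def \<mu>_def using assms one_minus_exp_neg_sq_ne_0[of "\<gamma>*(b-a)"] by simp
  have fx: "f x = g x + \<alpha> * exp (-\<gamma>*(x-a)) + \<beta> * exp (-\<gamma>*(b-x)) + c * h x"
    and fa: "f a = g a + \<alpha> + \<beta> * \<mu> + c * h a" and fb: "f b = g b + \<alpha> * \<mu> + \<beta> + c * h b"
    using f assms unfolding \<mu>_def by auto
  have "\<mu> * f b - f a = (\<mu> * g b - g a) + c * (\<mu> * h b - h a) - \<alpha> * d"
    "\<mu> * f a - f b = (\<mu> * g a - g b) + c * (\<mu> * h a - h b) - \<beta> * d"
    unfolding fa fb d_def by (simp_all add: algebra_simps power2_eq_square)
  then have quot: "(\<mu> * f b - f a) / d = (\<mu> * g b - g a) / d + c * ((\<mu> * h b - h a) / d) - \<alpha>"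
    "(\<mu> * f a - f b) / d = (\<mu> * g a - g b) / d + c * ((\<mu> * h a - h b) / d) - \<beta>"
    using \<open>d \<noteq> 0\<close> by (simp_all add: add_divide_distrib diff_divide_distrib right_diff_distrib)
  show ?thesis
    unfolding bdry_free_def \<mu>_def[symmetric] d_def[symmetric] fx quot by (simp add: algebra_simps)
qed

lemma D0_eq_bdry_free:
  "D0 a b Ca Cb v \<gamma> x = bdry_free a b (\<lambda>y. v y - I0 a b v \<gamma> y) \<gamma> x
     - (exp (-\<gamma>*(b-a)) * Cb - Ca) / (1 - exp (-\<gamma>*(b-a))^2) * exp (-\<gamma>*(x-a))
     - (exp (-\<gamma>*(b-a)) * Ca - Cb) / (1 - exp (-\<gamma>*(b-a))^2) * exp (-\<gamma>*(b-x))"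
  unfolding D0_def bdry_free_def Let_def
  by (simp add: algebra_simps diff_divide_distrib add_divide_distrib)

lemma bdry_free_I0_step:
  assumes C: "Cn_derivs n a b v Dv" and "j + 2 \<le> n" "a < b" "\<gamma> > 0" "x \<in> {a..b}"
  shows "bdry_free a b (I0 a b (Dv j) \<gamma>) \<gamma> x
    = bdry_free a b (Dv j) \<gamma> x + (1/\<gamma>)^2 * bdry_free a b (I0 a b (Dv (j+2)) \<gamma>) \<gamma> x"
proof -
  obtain \<alpha> \<beta> where "\<forall>y\<in>{a..b}. I0 a b (Dv j) \<gamma> y = Dv j y + \<alpha> * exp (-\<gamma>*(y-a))
      + \<beta> * exp (-\<gamma>*(b-y)) + (1/\<gamma>)^2 * I0 a b (Dv (j+2)) \<gamma> y"
    using I0_two_steps[OF C] assms by blast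
  then show ?thesis using assms by (intro bdry_free_affine)
qed

lemma D0_expansion:
  assumes C: "Cn_derivs n a b v Dv" and "a < b" "\<gamma> > 0" "x \<in> {a..b}"
  shows "2*m + 2 \<le> n \<Longrightarrow> D0 a b Ca Cb v \<gamma> x =
      - (\<Sum>p=1..m. (1/\<gamma>)^(2*p) * bdry_free a b (Dv (2*p)) \<gamma> x)
      - (exp (-\<gamma>*(b-a)) * Cb - Ca) / (1 - exp (-\<gamma>*(b-a))^2) * exp (-\<gamma>*(x-a))
      - (exp (-\<gamma>*(b-a)) * Ca - Cb) / (1 - exp (-\<gamma>*(b-a))^2) * exp (-\<gamma>*(b-x))
      - (1/\<gamma>)^(2*m+2) * bdry_free a b (I0 a b (Dv (2*m+2)) \<gamma>) \<gamma> x"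
proof (induction m)
  case 0
  have v: "\<And>y. y \<in> {a..b} \<Longrightarrow> v y = Dv 0 y" using C unfolding Cn_derivs_def by auto
  have "0 + 2 \<le> n" using 0 by simp
  from I0_two_steps[OF C this \<open>\<gamma> > 0\<close>] obtain \<alpha> \<beta>
    where I0: "\<forall>y\<in>{a..b}. I0 a b (Dv 0) \<gamma> y = Dv 0 y + \<alpha> * exp (-\<gamma>*(y-a))
      + \<beta> * exp (-\<gamma>*(b-y)) + (1/\<gamma>)^2 * I0 a b (Dv (0+2)) \<gamma> y" .
  have "\<forall>y\<in>{a..b}. v y - I0 a b v \<gamma> y = 0 + (-\<alpha>) * exp (-\<gamma>*(y-a))
      + (-\<beta>) * exp (-\<gamma>*(b-y)) + (- ((1/\<gamma>)^2)) * I0 a b (Dv (0+2)) \<gamma> y"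
    using I0 v I0_cong[of a b v "Dv 0"] by auto
  then have "bdry_free a b (\<lambda>y. v y - I0 a b v \<gamma> y) \<gamma> x = bdry_free a b (\<lambda>_. 0) \<gamma> x
      + (- ((1/\<gamma>)^2)) * bdry_free a b (I0 a b (Dv (0+2)) \<gamma>) \<gamma> x"
    by (rule bdry_free_affine[OF assms(2-4)])
  moreover have "bdry_free a b (\<lambda>_. 0) \<gamma> x = 0" by (simp add: bdry_free_def)
  ultimately show ?case
    unfolding D0_eq_bdry_free by (simp add: power2_eq_square)
next
  case (Suc m)
  have "2*m + 2 \<le> n" "2*m + 2 + 2 \<le> n" using Suc.prems by simp_all
  have step: "bdry_free a b (I0 a b (Dv (2*m+2)) \<gamma>) \<gamma> x = bdry_free a b (Dv (2*m+2)) \<gamma> x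
      + (1/\<gamma>)^2 * bdry_free a b (I0 a b (Dv (2*m+2+2)) \<gamma>) \<gamma> x"
    by (rule bdry_free_I0_step[OF C \<open>2*m + 2 + 2 \<le> n\<close> assms(2-4)])
  have "2 * Suc m = 2*m + 2" "2 * Suc m + 2 = 2*m + 2 + 2" by simp_all
  then show ?case
    unfolding Suc.IH[OF \<open>2*m + 2 \<le> n\<close>] step sum.cl_ivl_Suc
    by (simp add: algebra_simps power_add power2_eq_square)
qed

theorem lemma1:
  fixes a b \<gamma> Ca Cb :: real and k :: nat
    and v :: "real \<Rightarrow> real" and Dv :: "nat \<Rightarrow> real \<Rightarrow> real"
  assumes "a < b" and "\<gamma> > 0" and "k \<ge> 1"
  defines "\<mu> \<equiv> exp (-\<gamma>*(b-a))"
  shows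
   "(Cn_derivs (k+1) a b v Dv \<longrightarrow>
      (\<forall>x\<in>{a..b}.
        DL a Ca v \<gamma> x =
          - (\<Sum>p=1..k. (-1/\<gamma>)^p * (Dv p x - Dv p a * exp (-\<gamma>*(x-a))))
          - (-1/\<gamma>)^(k+1) * IL a (Dv (k+1)) \<gamma> x + Ca * exp (-\<gamma>*(x-a))
      \<and> DR b Cb v \<gamma> x =
          - (\<Sum>p=1..k. (1/\<gamma>)^p * (Dv p x - Dv p b * exp (-\<gamma>*(b-x))))
          - (1/\<gamma>)^(k+1) * IR b (Dv (k+1)) \<gamma> x + Cb * exp (-\<gamma>*(b-x))))
    \<and> (Cn_derivs (2*k+2) a b v Dv \<longrightarrow>
      (\<forall>x\<in>{a..b}.
        D0 a b Ca Cb v \<gamma> x =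
          - (\<Sum>p=1..k. (1/\<gamma>)^(2*p) *
               (Dv (2*p) x
                + (\<mu> * Dv (2*p) b - Dv (2*p) a) / (1 - \<mu>^2) * exp (-\<gamma>*(x-a))
                + (\<mu> * Dv (2*p) a - Dv (2*p) b) / (1 - \<mu>^2) * exp (-\<gamma>*(b-x))))
          - (\<mu> * Cb - Ca) / (1 - \<mu>^2) * exp (-\<gamma>*(x-a))
          - (\<mu> * Ca - Cb) / (1 - \<mu>^2) * exp (-\<gamma>*(b-x))
          - (1/\<gamma>)^(2*k+2) *
              (I0 a b (Dv (2*k+2)) \<gamma> x
               + (\<mu> * I0 a b (Dv (2*k+2)) \<gamma> b - I0 a b (Dv (2*k+2)) \<gamma> a) / (1 - \<mu>^2)
                   * exp (-\<gamma>*(x-a))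
               + (\<mu> * I0 a b (Dv (2*k+2)) \<gamma> a - I0 a b (Dv (2*k+2)) \<gamma> b) / (1 - \<mu>^2)
                   * exp (-\<gamma>*(b-x)))))"
  using DL_expansion[OF _ _ \<open>\<gamma> > 0\<close> order_refl] DR_expansion[OF _ _ \<open>\<gamma> > 0\<close> order_refl]
    D0_expansion[OF _ assms(1,2) _ order_refl]
  unfolding bdry_free_def \<mu>_def by simp

end
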